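(* Let $T$ be a non-star tree and $x$ a vertex of $T$ with neighbors $x_1,\dots,x_n$, $n>2$. Suppose that for $i=1,\dots,m$, where $2\le m<n$, the tree $T_{(x_i,x)}$ is a neighbor $F$-tree of $x$. Let $T'$ be the connected component containing $x$ in $T-\{xx_i: i=1,\dots,m\}$. Suppose there exists a $(T',z)$-good 2-placement $\sigma$ with $dist(x,\sigma(x))\le 2$, where $z$ is a vertex of $T'$ (possibly $z=x$). Then there exists a $(T,z)$-good 2-placement $\sigma_z$ such that $\sigma_z(v)=\sigma(v)$ for every $v\in V(T')$ and $dist_T(x_i,\sigma_z(x_i))\le 2$ for $i=1,\dots,m$.
   Context: All graphs are finite, simple and undirected. A non-star tree is a tree not isomorphic to a star $K_{1,m}$ for any $m\ge0$. For an edge $ab$ of a tree $T$, $T_{(a,b)}$ denotes the connected component containing $a$ in $T-\{ab\}$; it is a neighbor $F$-tree of $b$ if it is a path with at most $3$ vertices and, when it has exactly $3$ vertices, $a$ is an end vertex of it. For a tree $S$, a permutation $\sigma$ of $V(S)$ is a 2-placement of $S$ if $\sigma(a)\sigma(b)\notin E(S)$ for every edge $ab\in E(S)$; $\sigma(S)\subseteq S^k$ means $dist_S(\sigma(a),\sigma(b))\le k$ for every edge $ab$ of $S$. For a non-star tree $S$ and vertex $w$, a fixed-point-free permutation $\sigma$ of $V(S)$ is an $(S,w)$-good 2-placement if (distances and degrees taken in $S$): (1) $\sigma$ is a 2-placement of $S$; (2) $\sigma(S)\subseteq S^5$; (3) $dist(w,\sigma(w))=1$; (4) $dist(y,\sigma(y))\le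 2$ for every neighbor $y$ of $w$; (5) $dist(y,\sigma(y))\le 4$ for every $y$ of degree $1$. *)

theory Defs
  imports "HOL-Combinatorics.Permutations"
begin

definition simple_graph :: "'a set \<Rightarrow> 'a set set \<Rightarrow> bool" where
  "simple_graph V E \<longleftrightarrow> finite V \<and> (\<forall>e\<in>E. \<exists>a b. e = {a, b} \<and> a \<noteq> b \<and> a \<in> V \<and> b \<in> V)"

definition is_walk :: "'a set \<Rightarrow> 'a set set \<Rightarrow> 'a list \<Rightarrow> bool" where
  "is_walk V E xs \<longleftrightarrow> xs \<noteq> [] \<and> set xs \<subseteq> V \<and>
     (\<forall>i. Suc i < length xs \<longrightarrow> {xs ! i, xs ! Suc i} \<in> E)"

definition connected_graph :: "'a set \<Rightarrow> 'a set set \<Rightarrow> bool" where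
  "connected_graph V E \<longleftrightarrow> V \<noteq> {} \<and>
     (\<forall>u\<in>V. \<forall>v\<in>V. \<exists>xs. is_walk V E xs \<and> hd xs = u \<and> last xs = v)"

definition has_cycle :: "'a set \<Rightarrow> 'a set set \<Rightarrow> bool" where
  "has_cycle V E \<longleftrightarrow> (\<exists>xs. is_walk V E xs \<and> distinct xs \<and> length xs \<ge> 3 \<and> {last xs, hd xs} \<in> E)"

definition is_tree :: "'a set \<Rightarrow> 'a set set \<Rightarrow> bool" where
  "is_tree V E \<longleftrightarrow> simple_graph V E \<and> connected_graph V E \<and> \<not> has_cycle V E"

text \<open>A star K_{1,m} (m \<ge> 0): some centre vertex adjacent to all other vertices
  (for a tree this forces the edge set to be exactly the edges at the centre).\<close>
definition is_star :: "'a set \<Rightarrow> 'a set set \<Rightarrow> bool" where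
  "is_star V E \<longleftrightarrow> is_tree V E \<and> (\<exists>c\<in>V. \<forall>v\<in>V. v \<noteq> c \<longrightarrow> {c, v} \<in> E)"

definition non_star_tree :: "'a set \<Rightarrow> 'a set set \<Rightarrow> bool" where
  "non_star_tree V E \<longleftrightarrow> is_tree V E \<and> \<not> is_star V E"

definition gdist :: "'a set \<Rightarrow> 'a set set \<Rightarrow> 'a \<Rightarrow> 'a \<Rightarrow> nat" where
  "gdist V E u v = (LEAST n. \<exists>xs. is_walk V E xs \<and> hd xs = u \<and> last xs = v \<and> length xs = Suc n)"

definition degree :: "'a set \<Rightarrow> 'a set set \<Rightarrow> 'a \<Rightarrow> nat" where
  "degree V E v = card {u \<in> V. {v, u} \<in> E}"

definition comp :: "'a set \<Rightarrow> 'a set set \<Rightarrow> 'a \<Rightarrow> 'a set" where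
  "comp V E a = {v \<in> V. \<exists>xs. is_walk V E xs \<and> hd xs = a \<and> last xs = v}"

definition induced :: "'a set set \<Rightarrow> 'a set \<Rightarrow> 'a set set" where
  "induced E W = {e \<in> E. e \<subseteq> W}"

text \<open>T_(a,b): component containing a in T - {ab}.\<close>
definition branch_V :: "'a set \<Rightarrow> 'a set set \<Rightarrow> 'a \<Rightarrow> 'a \<Rightarrow> 'a set" where
  "branch_V V E a b = comp V (E - {{a, b}}) a"

definition branch_E :: "'a set \<Rightarrow> 'a set set \<Rightarrow> 'a \<Rightarrow> 'a \<Rightarrow> 'a set set" where
  "branch_E V E a b = induced (E - {{a, b}}) (branch_V V E a b)"

definition path_graph_seq :: "'a set \<Rightarrow> 'a set set \<Rightarrow> 'a list \<Rightarrow> bool" where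
  "path_graph_seq W F xs \<longleftrightarrow> xs \<noteq> [] \<and> distinct xs \<and> set xs = W \<and>
     F = {{xs ! i, xs ! Suc i} | i. Suc i < length xs}"

definition nbr_F_tree :: "'a set \<Rightarrow> 'a set set \<Rightarrow> 'a \<Rightarrow> 'a \<Rightarrow> bool" where
  "nbr_F_tree V E a b \<longleftrightarrow> {a, b} \<in> E \<and>
     (\<exists>xs. path_graph_seq (branch_V V E a b) (branch_E V E a b) xs \<and> length xs \<le> 3 \<and>
        (length xs = 3 \<longrightarrow> a = hd xs \<or> a = last xs))"

definition two_placement :: "'a set \<Rightarrow> 'a set set \<Rightarrow> ('a \<Rightarrow> 'a) \<Rightarrow> bool" where
  "two_placement V E \<sigma> \<longleftrightarrow> \<sigma> permutes V \<and> (\<forall>a b. {a, b} \<in> E \<longrightarrow> {\<sigma> a, \<sigma> b} \<notin> E)"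

definition good_placement :: "'a set \<Rightarrow> 'a set set \<Rightarrow> 'a \<Rightarrow> ('a \<Rightarrow> 'a) \<Rightarrow> bool" where
  "good_placement V E w \<sigma> \<longleftrightarrow>
     non_star_tree V E \<and> w \<in> V \<and> \<sigma> permutes V \<and> (\<forall>v\<in>V. \<sigma> v \<noteq> v) \<and>
     two_placement V E \<sigma> \<and>
     (\<forall>a b. {a, b} \<in> E \<longrightarrow> gdist V E (\<sigma> a) (\<sigma> b) \<le> 5) \<and>
     gdist V E w (\<sigma> w) = 1 \<and>
     (\<forall>y\<in>V. {w, y} \<in> E \<longrightarrow> gdist V E y (\<sigma> y) \<le> 2) \<and>
     (\<forall>y\<in>V. degree V E y = 1 \<longrightarrow> gdist V E y (\<sigma> y) \<le> 4)"

end

theory Submission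
  imports Defs "HOL-Combinatorics.Cycles"
begin

text \<open>Outside T' the tree consists of the branches T_(c,x), c \<in> X, each a path c, c-a or c-a-b
  hanging from x by its end c. Keep \<sigma> on T', fix a derangement r of X, and on the branch of c
  send c to the far end of the path, the neighbour of c to r c and the third vertex back to the
  middle one. Each branch loses c from its image and gains r c, so this is a permutation. Every
  edge inside a branch gets exactly one endpoint moved to another branch, and no edge joins two
  branches; an edge x c cannot be mapped to an edge because \<sigma> x \<noteq> x stays in T'. All new
  images lie within distance 3 of x and \<sigma> x within distance 2, which gives the distance bounds
  via x, while c itself moves by at most 2.\<close>

lemma is_walk_Cons_Cons_iff:
  "is_walk V E (u # v # xs) \<longleftrightarrow> {u, v} \<in> E \<and> u \<in> V \<and> is_walk V E (v # xs)"
proof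
  assume h: "is_walk V E (u # v # xs)"
  have "{(v # xs) ! i, (v # xs) ! Suc i} \<in> E" if "Suc i < length (v # xs)" for i
  proof -
    from that have "Suc (Suc i) < length (u # v # xs)" by simp
    with h have "{(u # v # xs) ! Suc i, (u # v # xs) ! Suc (Suc i)} \<in> E"
      unfolding is_walk_def by blast
    then show ?thesis by simp
  qed
  with h show "{u, v} \<in> E \<and> u \<in> V \<and> is_walk V E (v # xs)"
    unfolding is_walk_def by force
next
  assume h: "{u, v} \<in> E \<and> u \<in> V \<and> is_walk V E (v # xs)"
  show "is_walk V E (u # v # xs)" unfolding is_walk_def
  proof (intro conjI allI impI)
    fix i assume "Suc i < length (u # v # xs)"
    then show "{(u # v # xs) ! i, (u # v # xs) ! Suc i} \<in> E"
      using h unfolding is_walk_def by (cases i) auto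
  qed (use h in \<open>auto simp: is_walk_def\<close>)
qed

lemma is_walk_singleton: "v \<in> V \<Longrightarrow> is_walk V E [v]"
  by (simp add: is_walk_def)

lemma is_walk_edge: "{u, v} \<in> E \<Longrightarrow> u \<in> V \<Longrightarrow> v \<in> V \<Longrightarrow> is_walk V E [u, v]"
  by (simp add: is_walk_Cons_Cons_iff is_walk_singleton)

lemma is_walk_append_tl:
  assumes "is_walk V E xs" "is_walk V E ys" "last xs = hd ys"
  shows "is_walk V E (xs @ tl ys)"
  using assms
proof (induction xs rule: induct_list012)
  case 1 then show ?case by (simp add: is_walk_def)
next
  case (2 u) then show ?case by (cases ys) (auto simp: is_walk_def)
next
  case (3 u v xs) then show ?case by (simp add: is_walk_Cons_Cons_iff)
qed

lemma hd_last_append_tl: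
  "xs \<noteq> [] \<Longrightarrow> ys \<noteq> [] \<Longrightarrow> last xs = hd ys \<Longrightarrow> hd (xs @ tl ys) = hd xs \<and> last (xs @ tl ys) = last ys"
  by (cases ys) auto

lemma is_walk_rev: "is_walk V E xs \<Longrightarrow> is_walk V E (rev xs)"
proof (induction xs rule: induct_list012)
  case (3 u v xs)
  then have "is_walk V E (v # xs)" "{v, u} \<in> E" "u \<in> V"
    by (simp_all add: is_walk_Cons_Cons_iff insert_commute)
  with "3.IH"(2) have "is_walk V E (rev (v # xs))" and "is_walk V E [v, u]"
    by (auto simp: is_walk_edge is_walk_def)
  from is_walk_append_tl[OF this] show ?case by simp
qed simp_all

lemma is_walk_mono: "is_walk V E xs \<Longrightarrow> V \<subseteq> V2 \<Longrightarrow> E \<subseteq> E2 \<Longrightarrow> is_walk V2 E2 xs"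
  by (auto simp: is_walk_def)

lemma is_walk_take: "is_walk V E xs \<Longrightarrow> i < length xs \<Longrightarrow> is_walk V E (take (Suc i) xs)"
  by (auto simp: is_walk_def dest: in_set_takeD)

lemma is_walk_avoiding:
  assumes "is_walk V E xs" "x \<notin> set xs" "\<And>e. e \<in> E \<Longrightarrow> x \<notin> e \<Longrightarrow> e \<in> F"
  shows "is_walk V F xs"
  using assms unfolding is_walk_def by (metis insertE nth_mem Suc_lessD singletonD)

lemma is_walk_closed_set:
  assumes "is_walk V E xs" "hd xs \<in> S" "\<And>u w. u \<in> S \<Longrightarrow> {u, w} \<in> E \<Longrightarrow> w \<in> S"
  shows "set xs \<subseteq> S"
proof -
  have "i < length xs \<longrightarrow> xs ! i \<in> S" for i
  proof (induction i)
    case 0 then show ?case using assms(1,2) by (simp add: is_walk_def hd_conv_nth)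
  next
    case (Suc i) then show ?case using assms(1,3) by (auto simp: is_walk_def)
  qed
  then show ?thesis by (metis in_set_conv_nth subsetI)
qed

lemma gdist_le_walk:
  "is_walk V E xs \<Longrightarrow> hd xs = u \<Longrightarrow> last xs = v \<Longrightarrow> gdist V E u v \<le> length xs - 1"
  unfolding gdist_def by (rule Least_le) (auto simp: is_walk_def)

lemma gdist_attained:
  assumes "is_walk V E xs" "hd xs = u" "last xs = v"
  obtains ys where "is_walk V E ys" "hd ys = u" "last ys = v" "length ys = Suc (gdist V E u v)"
proof -
  have "xs \<noteq> []" using assms(1) by (simp add: is_walk_def)
  with assms have "is_walk V E xs \<and> hd xs = u \<and> last xs = v \<and> length xs = Suc (length xs - 1)"
    by simp
  then have "\<exists>n ys. is_walk V E ys \<and> hd ys = u \<and> last ys = v \<and> length ys = Suc n"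
    by (intro exI) assumption
  from LeastI_ex[OF this] show ?thesis using that unfolding gdist_def by blast
qed

lemma is_walk_segment:
  assumes "is_walk V E ws" "i \<le> j" "j < length ws"
  shows "is_walk V E (drop i (take (Suc j) ws))"
proof -
  have "drop i (take (Suc j) ws) ! k = ws ! (i + k)" if "k < Suc j - i" for k
    using that assms(3) by simp
  with assms show ?thesis unfolding is_walk_def
    by (auto simp: less_diff_conv dest: in_set_dropD in_set_takeD)
qed

lemma gdist_walk_nth:
  assumes "is_walk V E ws" "i \<le> j" "j < length ws"
  shows "gdist V E (ws ! i) (ws ! j) \<le> j - i"
proof -
  let ?seg = "drop i (take (Suc j) ws)"
  have "hd ?seg = ws ! i" "last ?seg = ws ! j" "length ?seg = Suc j - i"
    using assms(2,3) by (simp_all add: hd_drop_conv_nth last_conv_nth)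
  with gdist_le_walk[OF is_walk_segment[OF assms]] assms(2) show ?thesis by simp
qed

lemma gdist_walk_vertices:
  assumes "is_walk V E ws" "u \<in> set ws" "w \<in> set ws"
  shows "gdist V E u w < length ws"
proof -
  obtain i j where ij: "i < length ws" "ws ! i = u" "j < length ws" "ws ! j = w"
    using assms(2,3) by (auto simp: in_set_conv_nth)
  show ?thesis
  proof (cases "i \<le> j")
    case True
    with gdist_walk_nth[OF assms(1) True ij(3)] ij show ?thesis by simp
  next
    case False
    let ?n = "length ws"
    have "rev ws ! (?n - Suc i) = u" "rev ws ! (?n - Suc j) = w"
      using ij by (simp_all add: rev_nth)
    moreover have "?n - Suc i \<le> ?n - Suc j" "?n - Suc j < length (rev ws)"
      using False ij by simp_all
    ultimately have "gdist V E u w \<le> (?n - Suc j) - (?n - Suc i)"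
      using gdist_walk_nth[OF is_walk_rev[OF assms(1)]] by metis
    then show ?thesis using ij by simp
  qed
qed

lemma connected_graph_walk:
  "connected_graph V E \<Longrightarrow> u \<in> V \<Longrightarrow> v \<in> V \<Longrightarrow> \<exists>xs. is_walk V E xs \<and> hd xs = u \<and> last xs = v"
  by (simp add: connected_graph_def)

lemma gdist_triangle:
  assumes "connected_graph V E" "u \<in> V" "v \<in> V" "w \<in> V"
  shows "gdist V E u w \<le> gdist V E u v + gdist V E v w"
proof -
  obtain p where p: "is_walk V E p" "hd p = u" "last p = v" "length p = Suc (gdist V E u v)"
    using connected_graph_walk[OF assms(1-3)] gdist_attained by metis
  obtain q where q: "is_walk V E q" "hd q = v" "last q = w" "length q = Suc (gdist V E v w)"
    using connected_graph_walk[OF assms(1,3,4)] gdist_attained by metis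
  have "is_walk V E (p @ tl q)" using is_walk_append_tl p q by metis
  moreover have "hd (p @ tl q) = u" "last (p @ tl q) = w"
    using hd_last_append_tl[of p q] p q by (auto simp: is_walk_def)
  ultimately have "gdist V E u w \<le> length (p @ tl q) - 1" using gdist_le_walk by metis
  also have "\<dots> = gdist V E u v + gdist V E v w" using p(4) q(4) by simp
  finally show ?thesis .
qed

lemma gdist_sym:
  assumes "connected_graph V E" "u \<in> V" "v \<in> V"
  shows "gdist V E v u = gdist V E u v"
proof -
  have le: "gdist V E b a \<le> gdist V E a b" if ab: "a \<in> V" "b \<in> V" for a b
  proof -
    obtain p where p: "is_walk V E p" "hd p = a" "last p = b" "length p = Suc (gdist V E a b)"
      using connected_graph_walk[OF assms(1) ab] gdist_attained by metis
    then have "p \<noteq> []" by auto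
    with gdist_le_walk[OF is_walk_rev[OF p(1)]] p show ?thesis by (simp add: hd_rev last_rev)
  qed
  from le[of u v] le[of v u] assms(2,3) show ?thesis by simp
qed

lemma gdist_edge: "{u, v} \<in> E \<Longrightarrow> u \<in> V \<Longrightarrow> v \<in> V \<Longrightarrow> gdist V E u v \<le> 1"
  using gdist_le_walk[OF is_walk_edge] by fastforce

lemma gdist_eq_0_imp_eq:
  assumes "is_walk V E xs" "hd xs = u" "last xs = v" "gdist V E u v = 0"
  shows "u = v"
proof -
  obtain ys where "hd ys = u" "last ys = v" "length ys = Suc (gdist V E u v)"
    using gdist_attained[OF assms(1-3)] by metis
  with assms(4) show ?thesis by (cases ys) auto
qed

lemma gdist_subgraph_le:
  assumes "V1 \<subseteq> V" "E1 \<subseteq> E" "is_walk V1 E1 xs" "hd xs = u" "last xs = v"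
  shows "gdist V E u v \<le> gdist V1 E1 u v"
proof -
  obtain ys where "is_walk V1 E1 ys" "hd ys = u" "last ys = v" "length ys = Suc (gdist V1 E1 u v)"
    using gdist_attained[OF assms(3-5)] by metis
  with gdist_le_walk[OF is_walk_mono] assms(1,2) show ?thesis by fastforce
qed

lemma simple_graph_edge: "simple_graph V E \<Longrightarrow> {u, v} \<in> E \<Longrightarrow> u \<in> V \<and> v \<in> V \<and> u \<noteq> v"
  unfolding simple_graph_def by (metis doubleton_eq_iff)

lemma walk_last_in_vertices: "is_walk V F xs \<Longrightarrow> last xs \<in> V"
  unfolding is_walk_def using last_in_set by blast

lemma comp_iff: "v \<in> comp V F a \<longleftrightarrow> (\<exists>xs. is_walk V F xs \<and> hd xs = a \<and> last xs = v)"
  unfolding comp_def using walk_last_in_vertices by blast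

lemma comp_trans: "v \<in> comp V F a \<Longrightarrow> w \<in> comp V F v \<Longrightarrow> w \<in> comp V F a"
proof -
  assume "v \<in> comp V F a" "w \<in> comp V F v"
  then obtain xs ys where xs: "is_walk V F xs" "hd xs = a" "last xs = v"
    and ys: "is_walk V F ys" "hd ys = v" "last ys = w" by (auto simp: comp_iff)
  have "is_walk V F (xs @ tl ys)" using is_walk_append_tl xs ys by metis
  moreover have "hd (xs @ tl ys) = a" "last (xs @ tl ys) = w"
    using hd_last_append_tl[of xs ys] xs ys by (auto simp: is_walk_def)
  ultimately show ?thesis unfolding comp_iff by blast
qed

lemma comp_self: "a \<in> V \<Longrightarrow> a \<in> comp V F a"
  using is_walk_singleton by (fastforce simp: comp_iff)

lemma comp_edge_closed: "v \<in> comp V F a \<Longrightarrow> {v, w} \<in> F \<Longrightarrow> w \<in> V \<Longrightarrow> w \<in> comp V F a"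
proof -
  assume h: "v \<in> comp V F a" "{v, w} \<in> F" "w \<in> V"
  then have "is_walk V F [v, w]" by (simp add: is_walk_edge comp_def)
  then have "w \<in> comp V F v" by (fastforce simp: comp_iff)
  with h(1) show ?thesis by (rule comp_trans)
qed

lemma comp_sym: "v \<in> comp V F a \<Longrightarrow> a \<in> comp V F v"
  unfolding comp_iff by (metis is_walk_rev hd_rev last_rev is_walk_def)

lemma comp_subset: "comp V F a \<subseteq> V"
  by (auto simp: comp_def)

lemma comp_mono: "F \<subseteq> G \<Longrightarrow> comp V F a \<subseteq> comp V G a"
proof
  fix v assume "F \<subseteq> G" "v \<in> comp V F a"
  then obtain xs where "is_walk V F xs" "hd xs = a" "last xs = v" by (auto simp: comp_iff)
  with \<open>F \<subseteq> G\<close> show "v \<in> comp V G a" unfolding comp_iff by (blast intro: is_walk_mono)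
qed

lemma walk_in_comp: assumes "is_walk V F xs" "hd xs = a" shows "set xs \<subseteq> comp V F a"
proof
  fix v assume "v \<in> set xs"
  then obtain i where i: "i < length xs" "xs ! i = v" by (auto simp: in_set_conv_nth)
  have "hd (take (Suc i) xs) = a" using assms(2) i(1) by (cases xs) auto
  moreover have "last (take (Suc i) xs) = v" using i by (simp add: take_Suc_conv_app_nth)
  ultimately show "v \<in> comp V F a" using is_walk_take[OF assms(1) i(1)] unfolding comp_iff by blast
qed

lemma derangement_exists:
  assumes "finite X" "2 \<le> card X"
  obtains r where "r permutes X" "\<forall>c\<in>X. r c \<noteq> c"
proof -
  obtain xs where xs: "set xs = X" "distinct xs" using finite_distinct_list[OF assms(1)] by blast
  have n2: "2 \<le> length xs" using distinct_card[OF xs(2)] xs(1) assms(2) by simp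
  have rotation: "map (cycle_of_list xs) xs = rotate1 xs" using cyclic_rotation[OF xs(2), of 1] by simp
  have "cycle_of_list xs c \<noteq> c" if "c \<in> X" for c
  proof -
    obtain i where i: "i < length xs" "xs ! i = c" using \<open>c \<in> X\<close> xs(1) by (auto simp: in_set_conv_nth)
    have "cycle_of_list xs c = rotate1 xs ! i" using i rotation by (metis nth_map)
    also have "\<dots> = xs ! (Suc i mod length xs)" using i(1) by (simp add: nth_rotate1)
    finally have img: "cycle_of_list xs c = xs ! (Suc i mod length xs)" .
    have "Suc i mod length xs \<noteq> i"
      using i(1) n2 by (cases "Suc i < length xs") (auto simp: not_less_eq less_Suc_eq)
    moreover have "Suc i mod length xs < length xs" using i(1) by (intro mod_less_divisor) linarith
    ultimately have "xs ! (Suc i mod length xs) \<noteq> xs ! i"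
      using nth_eq_iff_index_eq[OF xs(2)] i(1) by simp
    with img i(2) show ?thesis by simp
  qed
  with cycle_permutes[of xs] xs(1) that show ?thesis by blast
qed

lemma path_edge_set_rev_subset:
  "{{rev ys ! i, rev ys ! Suc i} | i. Suc i < length ys} \<subseteq> {{ys ! i, ys ! Suc i} | i. Suc i < length ys}"
proof clarify
  fix i assume i: "Suc i < length ys"
  define j where "j = length ys - Suc (Suc i)"
  have "Suc j < length ys" "rev ys ! i = ys ! Suc j" "rev ys ! Suc i = ys ! j"
    using i by (simp_all add: j_def rev_nth Suc_diff_Suc)
  then show "\<exists>j. {rev ys ! i, rev ys ! Suc i} = {ys ! j, ys ! Suc j} \<and> Suc j < length ys"
    by (intro exI[of _ j]) (auto simp: insert_commute)
qed

lemma path_graph_seq_rev: "path_graph_seq W F ys \<Longrightarrow> path_graph_seq W F (rev ys)"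
  using path_edge_set_rev_subset[of ys] path_edge_set_rev_subset[of "rev ys"]
  unfolding path_graph_seq_def by auto

lemma path_graph_seq_from_end:
  assumes "path_graph_seq W F ys" "length ys \<le> 3" "c \<in> W" "length ys = 3 \<longrightarrow> c = hd ys \<or> c = last ys"
  obtains zs where "path_graph_seq W F zs" "length zs \<le> 3" "hd zs = c"
proof -
  have "c = hd ys \<or> c = last ys"
  proof (cases "length ys = 3")
    case False
    with assms(2) have "length ys \<le> 2" by simp
    moreover from assms(1,3) have "c \<in> set ys" by (simp add: path_graph_seq_def)
    ultimately show ?thesis by (auto simp: numeral_2_eq_2 le_Suc_eq length_Suc_conv)
  qed (use assms(4) in blast)
  then show ?thesis
  proof
    assume "c = hd ys" then show ?thesis using that assms(1,2) by blast
  next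
    assume "c = last ys"
    moreover have "ys \<noteq> []" using assms(1) by (simp add: path_graph_seq_def)
    ultimately show ?thesis using that path_graph_seq_rev[OF assms(1)] assms(2) by (simp add: hd_rev)
  qed
qed

lemma path_graph_seq_is_walk:
  "path_graph_seq W F ys \<Longrightarrow> W \<subseteq> V \<Longrightarrow> F \<subseteq> E \<Longrightarrow> is_walk V E ys"
  unfolding path_graph_seq_def is_walk_def by blast

lemma short_list_cases:
  assumes "ys \<noteq> []" "length ys \<le> 3"
  obtains p where "ys = [p]" | p q where "ys = [p, q]" | p q r where "ys = [p, q, r]"
proof (cases ys)
  case (Cons p ys1)
  show ?thesis
  proof (cases ys1)
    case Nil with Cons that(1) show ?thesis by simp
  next
    case (Cons q ys2)
    show ?thesis
    proof (cases ys2)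
      case Nil with Cons \<open>ys = p # ys1\<close> that(2) show ?thesis by simp
    next
      case (Cons r ys3)
      with \<open>ys1 = q # ys2\<close> \<open>ys = p # ys1\<close> assms(2) have "ys = [p, q, r]" by simp
      with that(3) show ?thesis by simp
    qed
  qed
qed (use assms(1) in simp)

text \<open>On a path [c, a, b] the vertices move c \<mapsto> b \<mapsto> a \<mapsto> t; shorter paths are
  truncations of this cycle.\<close>

fun branch_shift :: "'a \<Rightarrow> 'a list \<Rightarrow> 'a \<Rightarrow> 'a" where
  "branch_shift t [c] v = t"
| "branch_shift t [c, a] v = (if v = c then a else t)"
| "branch_shift t [c, a, b] v = (if v = c then b else if v = a then t else a)"
| "branch_shift t ys v = v"

lemma branch_shift_in:
  "ys \<noteq> [] \<Longrightarrow> length ys \<le> 3 \<Longrightarrow> v \<in> set ys \<Longrightarrow> branch_shift t ys v \<in> insert t (set ys)"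
  by (cases ys rule: short_list_cases) auto

lemma branch_shift_neq:
  "distinct ys \<Longrightarrow> length ys \<le> 3 \<Longrightarrow> t \<notin> set ys \<Longrightarrow> v \<in> set ys \<Longrightarrow> branch_shift t ys v \<noteq> v"
  by (cases ys rule: short_list_cases) auto

lemma branch_shift_onto:
  "ys \<noteq> [] \<Longrightarrow> length ys \<le> 3 \<Longrightarrow> distinct ys \<Longrightarrow> insert t (set (tl ys)) \<subseteq> branch_shift t ys ` set ys"
  by (cases ys rule: short_list_cases) (auto simp: image_iff)

lemma branch_shift_path_edge:
  assumes "distinct ys" "length ys \<le> 3" "Suc i < length ys"
  shows "branch_shift t ys (ys ! i) = t \<and> branch_shift t ys (ys ! Suc i) \<in> set ys \<or>
         branch_shift t ys (ys ! Suc i) = t \<and> branch_shift t ys (ys ! i) \<in> set ys"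
proof -
  from assms(3) have "ys \<noteq> []" by auto
  from this assms(2) show ?thesis
    using assms(1,3) by (cases ys rule: short_list_cases) (auto simp: less_Suc_eq)
qed

lemma branch_shift_hd:
  assumes "tl ys \<noteq> []" "length ys \<le> 3"
  shows "branch_shift t ys (hd ys) \<in> set (tl ys)"
proof -
  from assms(1) have "ys \<noteq> []" by auto
  from this assms(2) show ?thesis using assms(1) by (cases ys rule: short_list_cases) auto
qed

locale pendant_branches =
  fixes V :: "'a set" and E :: "'a set set" and x :: 'a and X :: "'a set"
  assumes tree: "non_star_tree V E"
    and x_in_V: "x \<in> V"
    and degree_x: "card {y \<in> V. {x, y} \<in> E} > 2"
    and X_neighbours: "X \<subseteq> {y \<in> V. {x, y} \<in> E}"
    and X_short_branches: "\<forall>c\<in>X. nbr_F_tree V E c x"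
begin

abbreviation "cut_edges \<equiv> E - {{x, c} | c. c \<in> X}"

definition "core = comp V cut_edges x"

definition "core_edges = induced cut_edges core"

abbreviation "branch c \<equiv> branch_V V E c x"

lemma connected: "connected_graph V E"
  using tree by (simp add: non_star_tree_def is_tree_def)

lemma simple: "simple_graph V E"
  using tree by (simp add: non_star_tree_def is_tree_def)

lemma finite_V: "finite V"
  using simple by (simp add: simple_graph_def)

lemma edge_vertices: "{u, v} \<in> E \<Longrightarrow> u \<in> V \<and> v \<in> V \<and> u \<noteq> v"
  using simple_graph_edge[OF simple] .

lemma X_edge: "c \<in> X \<Longrightarrow> {x, c} \<in> E \<and> c \<in> V \<and> c \<noteq> x"
  using X_neighbours edge_vertices by blast

lemma finite_X: "finite X"
  using X_neighbours finite_V finite_subset by fastforce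

lemma branch_eq: "branch c = comp V (E - {{c, x}}) c"
  by (simp add: branch_V_def)

lemma attachment_in_branch: "c \<in> X \<Longrightarrow> c \<in> branch c"
  unfolding branch_eq by (rule comp_self) (use X_edge in blast)

lemma branch_subset: "branch c \<subseteq> V"
  by (simp add: branch_V_def comp_subset)

definition "branch_seq c =
  (SOME ys. path_graph_seq (branch c) (branch_E V E c x) ys \<and> length ys \<le> 3 \<and> hd ys = c)"

lemma branch_seq:
  assumes "c \<in> X"
  shows "path_graph_seq (branch c) (branch_E V E c x) (branch_seq c)"
    "length (branch_seq c) \<le> 3" "hd (branch_seq c) = c"
proof -
  obtain ys where "path_graph_seq (branch c) (branch_E V E c x) ys" "length ys \<le> 3"
      "length ys = 3 \<longrightarrow> c = hd ys \<or> c = last ys"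
    using X_short_branches assms unfolding nbr_F_tree_def by blast
  then obtain zs where "path_graph_seq (branch c) (branch_E V E c x) zs \<and> length zs \<le> 3 \<and> hd zs = c"
    using path_graph_seq_from_end attachment_in_branch[OF assms] by metis
  then have "path_graph_seq (branch c) (branch_E V E c x) (branch_seq c) \<and>
      length (branch_seq c) \<le> 3 \<and> hd (branch_seq c) = c"
    unfolding branch_seq_def by (rule someI)
  then show "path_graph_seq (branch c) (branch_E V E c x) (branch_seq c)"
    "length (branch_seq c) \<le> 3" "hd (branch_seq c) = c" by simp_all
qed

lemma set_branch_seq: "c \<in> X \<Longrightarrow> set (branch_seq c) = branch c"
  using branch_seq(1) by (simp add: path_graph_seq_def)

lemma distinct_branch_seq: "c \<in> X \<Longrightarrow> distinct (branch_seq c)"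
  using branch_seq(1) by (simp add: path_graph_seq_def)

lemma branch_seq_nonempty: "c \<in> X \<Longrightarrow> branch_seq c \<noteq> []"
  using branch_seq(1) by (simp add: path_graph_seq_def)

lemma branch_seq_Cons: "c \<in> X \<Longrightarrow> branch_seq c = c # tl (branch_seq c)"
  using branch_seq_nonempty branch_seq(3) list.collapse by metis

lemma card_branch: "c \<in> X \<Longrightarrow> card (branch c) \<le> 3"
  using branch_seq(2) card_length le_trans set_branch_seq by metis

text \<open>A branch containing x would contain x together with all of its at least three
  neighbours, too many for a path on at most three vertices.\<close>

lemma x_notin_branch:
  assumes "c \<in> X"
  shows "x \<notin> branch c"
proof
  assume x_in: "x \<in> branch c"
  define N where "N = {y \<in> V. {x, y} \<in> E}"
  have "N \<subseteq> branch c"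
  proof
    fix y assume "y \<in> N"
    then have y: "y \<in> V" "{x, y} \<in> E" by (auto simp: N_def)
    show "y \<in> branch c"
    proof (cases "y = c")
      case False
      with y(2) edge_vertices[OF y(2)] have "{x, y} \<in> E - {{c, x}}" by (auto simp: doubleton_eq_iff)
      with x_in y(1) show ?thesis using comp_edge_closed by (metis branch_eq)
    qed (simp add: attachment_in_branch assms)
  qed
  moreover have "x \<notin> N" using edge_vertices[of x x] by (auto simp: N_def)
  ultimately have "card (insert x N) \<le> card (branch c)"
    using x_in card_mono finite_subset[OF branch_subset finite_V] by (metis insert_subset)
  moreover have "finite N" using finite_V by (simp add: N_def)
  ultimately show False
    using card_branch[OF assms] degree_x \<open>x \<notin> N\<close> by (simp add: N_def)
qed

lemma cut_edges_subset: "c \<in> X \<Longrightarrow> cut_edges \<subseteq> E - {{c, x}}"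
  by (auto simp: insert_commute)

lemma x_in_core: "x \<in> core"
  by (simp add: core_def comp_self x_in_V)

lemma core_subset: "core \<subseteq> V"
  by (simp add: core_def comp_subset)

lemma branch_core_disjoint:
  assumes "c \<in> X" "v \<in> branch c"
  shows "v \<notin> core"
proof
  assume "v \<in> core"
  then have "v \<in> comp V (E - {{c, x}}) x"
    using comp_mono[OF cut_edges_subset[OF assms(1)]] by (auto simp: core_def)
  then have "x \<in> comp V (E - {{c, x}}) v" by (rule comp_sym)
  with assms(2) have "x \<in> branch c" using comp_trans by (metis branch_eq)
  with x_notin_branch assms(1) show False by blast
qed

lemma attachment_notin_core: "c \<in> X \<Longrightarrow> c \<notin> core"
  using branch_core_disjoint attachment_in_branch by blast

lemma branches_disjoint:
  assumes "c \<in> X" "c' \<in> X" "v \<in> branch c" "v \<in> branch c'"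
  shows "c = c'"
proof (rule ccontr)
  assume "c \<noteq> c'"
  obtain ws where ws: "is_walk V (E - {{c', x}}) ws" "hd ws = c'" "last ws = v"
    using assms(4) by (auto simp: branch_eq comp_iff)
  have "set ws \<subseteq> branch c'" using walk_in_comp[OF ws(1,2)] by (simp add: branch_eq)
  then have "x \<notin> set ws" using x_notin_branch[OF assms(2)] by blast
  then have "is_walk V (E - {{c, x}}) ws" by (rule is_walk_avoiding[OF ws(1)]) auto
  then have "v \<in> comp V (E - {{c, x}}) c'" unfolding comp_iff using ws(2,3) by blast
  then have "c' \<in> comp V (E - {{c, x}}) v" by (rule comp_sym)
  with assms(3) have c'_in: "c' \<in> branch c" using comp_trans by (metis branch_eq)
  have "{c', x} \<in> E - {{c, x}}"
    using \<open>c \<noteq> c'\<close> X_edge[OF assms(1)] X_edge[OF assms(2)] by (auto simp: doubleton_eq_iff insert_commute)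
  with c'_in have "x \<in> branch c" using comp_edge_closed x_in_V by (metis branch_eq)
  with x_notin_branch assms(1) show False by blast
qed

lemma edge_leaving_branch:
  assumes "c \<in> X" "u \<in> branch c" "{u, w} \<in> E"
  shows "w \<in> branch c \<and> {u, w} \<noteq> {c, x} \<or> u = c \<and> w = x"
proof (cases "{u, w} = {c, x}")
  case True
  moreover have "u \<noteq> x" using x_notin_branch[OF assms(1)] assms(2) by blast
  ultimately show ?thesis by (auto simp: doubleton_eq_iff)
next
  case False
  with assms(3) have "{u, w} \<in> E - {{c, x}}" by simp
  with assms(2,3) have "w \<in> branch c" using comp_edge_closed edge_vertices by (metis branch_eq)
  with False show ?thesis by simp
qed

lemma edge_inside_branch:
  assumes "c \<in> X" "u \<in> branch c" "w \<in> branch c" "{u, w} \<in> E"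
  shows "{u, w} \<in> branch_E V E c x"
proof -
  have "{u, w} \<noteq> {c, x}" using x_notin_branch[OF assms(1)] assms(2,3) by (auto simp: doubleton_eq_iff)
  with assms show ?thesis by (simp add: branch_E_def induced_def)
qed

lemma no_edge_between_branches:
  assumes "c \<in> X" "c' \<in> X" "c \<noteq> c'" "u \<in> branch c" "w \<in> branch c'"
  shows "{u, w} \<notin> E"
proof
  assume "{u, w} \<in> E"
  from edge_leaving_branch[OF assms(1,4) this] show False
    using branches_disjoint assms x_notin_branch by blast
qed

lemma core_branches_edge_closed:
  assumes "u \<in> core \<union> (\<Union>c\<in>X. branch c)" "{u, w} \<in> E"
  shows "w \<in> core \<union> (\<Union>c\<in>X. branch c)"
proof (cases "u \<in> core")
  case True
  show ?thesis
  proof (cases "{u, w} \<in> {{x, c} | c. c \<in> X}")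
    case True
    then obtain c where c: "c \<in> X" "{u, w} = {x, c}" by blast
    then have "w = x \<or> w = c" by (auto simp: doubleton_eq_iff)
    then show ?thesis
    proof
      assume "w = x" then show ?thesis using x_in_core by simp
    next
      have "c \<in> (\<Union>c\<in>X. branch c)" using attachment_in_branch[OF c(1)] c(1) by blast
      moreover assume "w = c"
      ultimately show ?thesis by blast
    qed
  next
    case False
    with assms(2) have "{u, w} \<in> cut_edges" by simp
    with \<open>u \<in> core\<close> have "w \<in> core"
      using comp_edge_closed[of u V cut_edges x w] edge_vertices[OF assms(2)] by (simp add: core_def)
    then show ?thesis by simp
  qed
next
  case False
  with assms(1) obtain c where "c \<in> X" "u \<in> branch c" by blast
  from edge_leaving_branch[OF this assms(2)] show ?thesis
    using \<open>c \<in> X\<close> x_in_core by auto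
qed

lemma core_or_branch:
  assumes "v \<in> V"
  shows "v \<in> core \<or> (\<exists>c\<in>X. v \<in> branch c)"
proof -
  obtain ws where ws: "is_walk V E ws" "hd ws = x" "last ws = v"
    using connected_graph_walk[OF connected x_in_V assms] by blast
  have "hd ws \<in> core \<union> (\<Union>c\<in>X. branch c)" using ws(2) x_in_core by simp
  then have "set ws \<subseteq> core \<union> (\<Union>c\<in>X. branch c)"
    using is_walk_closed_set[OF ws(1)] core_branches_edge_closed by blast
  moreover have "v \<in> set ws" using ws(1,3) by (auto simp: is_walk_def)
  ultimately show ?thesis by blast
qed

lemma edge_cases:
  assumes "{a, b} \<in> E"
  obtains "a \<in> core" "b \<in> core"
  | c where "c \<in> X" "a = x" "b = c"
  | c where "c \<in> X" "a = c" "b = x"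
  | c where "c \<in> X" "a \<in> branch c" "b \<in> branch c"
proof -
  have ab: "a \<in> V" "b \<in> V" using edge_vertices[OF assms] by simp_all
  have ba: "{b, a} \<in> E" using assms by (simp add: insert_commute)
  consider "a \<in> core" "b \<in> core" | c where "c \<in> X" "a \<in> branch c" | c where "c \<in> X" "b \<in> branch c"
    using core_or_branch ab by blast
  then show ?thesis
  proof cases
    case (2 c) with edge_leaving_branch[OF 2 assms] that show ?thesis by blast
  next
    case (3 c) with edge_leaving_branch[OF 3 ba] that show ?thesis by blast
  qed (use that in blast)
qed

lemma edge_branch_core:
  assumes "c \<in> X" "u \<in> branch c" "w \<in> core" "{u, w} \<in> E"
  shows "u = c \<and> w = x"
  using edge_leaving_branch[OF assms(1,2,4)] branch_core_disjoint[OF assms(1)] assms(3) by blast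

lemma gdist_x_attachment: "c \<in> X \<Longrightarrow> gdist V E x c \<le> 1"
  using X_edge[of c] x_in_V by (intro gdist_edge) simp_all

lemma gdist_via_x:
  assumes "u \<in> V" "w \<in> V"
  shows "gdist V E u w \<le> gdist V E x u + gdist V E x w"
  using gdist_triangle[OF connected assms(1) x_in_V assms(2)] gdist_sym[OF connected x_in_V assms(1)]
  by simp

lemma core_edges_subset: "core_edges \<subseteq> E"
  by (auto simp: core_edges_def induced_def)

lemma core_edge: "u \<in> core \<Longrightarrow> w \<in> core \<Longrightarrow> {u, w} \<in> E \<Longrightarrow> {u, w} \<in> core_edges"
  using attachment_notin_core by (auto simp: core_edges_def induced_def doubleton_eq_iff)

lemma core_neighbours:
  assumes "y \<in> core" "y \<noteq> x"
  shows "{u \<in> core. {y, u} \<in> core_edges} = {u \<in> V. {y, u} \<in> E}"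
proof -
  have "u \<in> core" if "u \<in> V" "{y, u} \<in> E" for u
  proof -
    have "{y, u} \<in> cut_edges"
      using that(2) assms attachment_notin_core by (auto simp: doubleton_eq_iff)
    with assms(1) that(1) show ?thesis using comp_edge_closed[of y V cut_edges x u] by (simp add: core_def)
  qed
  then show ?thesis using core_edge assms(1) core_subset core_edges_subset by blast
qed

lemma branch_seq_is_walk: "c \<in> X \<Longrightarrow> is_walk V E (branch_seq c)"
  using path_graph_seq_is_walk[OF branch_seq(1) branch_subset]
  by (auto simp: branch_E_def induced_def)

lemma is_walk_via_x_to_branch:
  assumes "c \<in> X" "c' \<in> X"
  shows "is_walk V E (c' # x # branch_seq c)"
proof -
  have "is_walk V E (branch_seq c)" using branch_seq_is_walk[OF assms(1)] .
  moreover have "branch_seq c = c # tl (branch_seq c)" using branch_seq_Cons[OF assms(1)] .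
  moreover have "{c', x} \<in> E" "c' \<in> V" "{x, c} \<in> E"
    using X_edge[OF assms(1)] X_edge[OF assms(2)] by (simp_all add: insert_commute)
  ultimately show ?thesis
    using x_in_V is_walk_Cons_Cons_iff by metis
qed

lemma branch_edge_is_path_edge:
  assumes "c \<in> X" "u \<in> branch c" "w \<in> branch c" "{u, w} \<in> E"
  obtains i where "Suc i < length (branch_seq c)"
    "{u, w} = {branch_seq c ! i, branch_seq c ! Suc i}"
  using edge_inside_branch[OF assms] branch_seq(1)[OF assms(1)] that
  unfolding path_graph_seq_def by blast

end

locale core_placement = pendant_branches +
  fixes z :: 'a and \<sigma> :: "'a \<Rightarrow> 'a"
  assumes two_le_card_X: "2 \<le> card X"
    and z_in_core: "z \<in> core"
    and good: "good_placement core core_edges z \<sigma>"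
    and x_moves_close: "gdist core core_edges x (\<sigma> x) \<le> 2"
begin

lemma \<sigma>_permutes: "\<sigma> permutes core"
  using good by (simp add: good_placement_def)

lemma \<sigma>_in_core: "v \<in> core \<Longrightarrow> \<sigma> v \<in> core"
  using \<sigma>_permutes by (simp add: permutes_in_image)

lemma \<sigma>_no_fixpoint: "v \<in> core \<Longrightarrow> \<sigma> v \<noteq> v"
  using good by (simp add: good_placement_def)

lemma gdist_core:
  assumes "u \<in> core" "v \<in> core"
  shows "gdist V E u v \<le> gdist core core_edges u v"
proof -
  have "connected_graph core core_edges"
    using good by (simp add: good_placement_def non_star_tree_def is_tree_def)
  from connected_graph_walk[OF this assms]
  obtain ws where "is_walk core core_edges ws" "hd ws = u" "last ws = v" by blast
  then show ?thesis using gdist_subgraph_le[OF core_subset core_edges_subset] by blast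
qed

definition "next_attachment = (SOME r. r permutes X \<and> (\<forall>c\<in>X. r c \<noteq> c))"

lemma next_attachment_derangement: "next_attachment permutes X" "\<forall>c\<in>X. next_attachment c \<noteq> c"
proof -
  obtain r where "r permutes X \<and> (\<forall>c\<in>X. r c \<noteq> c)"
    using derangement_exists[OF finite_X two_le_card_X] by blast
  then have "next_attachment permutes X \<and> (\<forall>c\<in>X. next_attachment c \<noteq> c)"
    unfolding next_attachment_def by (rule someI[where P = "\<lambda>r. r permutes X \<and> (\<forall>c\<in>X. r c \<noteq> c)"])
  then show "next_attachment permutes X" "\<forall>c\<in>X. next_attachment c \<noteq> c" by simp_all
qed

lemma next_attachment_in_X: "c \<in> X \<Longrightarrow> next_attachment c \<in> X"
  using next_attachment_derangement(1) by (simp add: permutes_in_image)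

lemma next_attachment_notin_branch: "c \<in> X \<Longrightarrow> next_attachment c \<notin> branch c"
  using branches_disjoint[of c "next_attachment c"] next_attachment_in_X attachment_in_branch next_attachment_derangement(2) by metis

definition "owner v = (THE c. c \<in> X \<and> v \<in> branch c)"

definition "extension v =
  (if v \<in> core then \<sigma> v
   else if \<exists>c\<in>X. v \<in> branch c then branch_shift (next_attachment (owner v)) (branch_seq (owner v)) v
   else v)"

lemma extension_core: "v \<in> core \<Longrightarrow> extension v = \<sigma> v"
  by (simp add: extension_def)

lemma extension_branch:
  assumes "c \<in> X" "v \<in> branch c"
  shows "extension v = branch_shift (next_attachment c) (branch_seq c) v"
proof -
  have "owner v = c"
    unfolding owner_def using assms branches_disjoint by blast
  with assms branch_core_disjoint show ?thesis by (auto simp: extension_def)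
qed

lemma extension_outside: "v \<notin> V \<Longrightarrow> extension v = v"
  using core_subset branch_subset by (auto simp: extension_def)

lemma extension_branch_into:
  assumes "c \<in> X" "v \<in> branch c"
  shows "extension v \<in> insert (next_attachment c) (branch c)"
  using branch_shift_in[OF branch_seq_nonempty branch_seq(2)] assms
  by (simp add: extension_branch set_branch_seq)

lemma extension_branch_in_branches:
  assumes "c \<in> X" "v \<in> branch c"
  obtains c' where "c' \<in> X" "extension v \<in> branch c'"
proof -
  have next_c: "next_attachment c \<in> X" "next_attachment c \<in> branch (next_attachment c)"
    using next_attachment_in_X[OF assms(1)] attachment_in_branch by simp_all
  from extension_branch_into[OF assms] consider "extension v = next_attachment c" | "extension v \<in> branch c" by blast
  then show ?thesis
    using that[OF assms(1)] that[OF next_c(1)] next_c(2) by cases simp_all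
qed

lemma extension_branch_neq:
  assumes "c \<in> X" "v \<in> branch c"
  shows "extension v \<noteq> v"
  using branch_shift_neq[OF distinct_branch_seq branch_seq(2)] next_attachment_notin_branch assms
  by (simp add: extension_branch set_branch_seq)

lemma branch_subset_extension_image:
  assumes "c \<in> X"
  shows "branch c \<subseteq> extension ` (\<Union>c\<in>X. branch c)"
proof -
  have hit: "insert (next_attachment d) (set (tl (branch_seq d))) \<subseteq> extension ` (\<Union>c\<in>X. branch c)" if "d \<in> X" for d
  proof -
    have "insert (next_attachment d) (set (tl (branch_seq d))) \<subseteq> branch_shift (next_attachment d) (branch_seq d) ` branch d"
      using branch_shift_onto[OF branch_seq_nonempty[OF that] branch_seq(2)[OF that]
          distinct_branch_seq[OF that]] set_branch_seq[OF that] by simp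
    also have "\<dots> = extension ` branch d"
      by (rule image_cong) (simp_all add: extension_branch[OF that])
    also have "\<dots> \<subseteq> extension ` (\<Union>c\<in>X. branch c)" using that by blast
    finally show ?thesis .
  qed
  have "c \<in> next_attachment ` X" using permutes_image[OF next_attachment_derangement(1)] assms by simp
  then obtain d where "d \<in> X" "next_attachment d = c" by blast
  with hit have "c \<in> extension ` (\<Union>c\<in>X. branch c)" by blast
  moreover have "branch c = insert c (set (tl (branch_seq c)))"
    using set_branch_seq[OF assms] branch_seq_Cons[OF assms] by (metis list.simps(15))
  ultimately show ?thesis using hit[OF assms] by blast
qed

lemma extension_branch_edge:
  assumes "c \<in> X" "u \<in> branch c" "w \<in> branch c" "{u, w} \<in> E"
  shows "extension u = next_attachment c \<and> extension w \<in> branch c \<or> extension w = next_attachment c \<and> extension u \<in> branch c"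
proof -
  obtain i where i: "Suc i < length (branch_seq c)" "{u, w} = {branch_seq c ! i, branch_seq c ! Suc i}"
    using branch_edge_is_path_edge[OF assms] .
  from branch_shift_path_edge[OF distinct_branch_seq branch_seq(2) i(1), of "next_attachment c"] assms(1)
  have "extension (branch_seq c ! i) = next_attachment c \<and> extension (branch_seq c ! Suc i) \<in> branch c \<or>
        extension (branch_seq c ! Suc i) = next_attachment c \<and> extension (branch_seq c ! i) \<in> branch c"
    using i(1) extension_branch set_branch_seq by (metis Suc_lessD nth_mem)
  with i(2) show ?thesis by (auto simp: doubleton_eq_iff)
qed

lemma gdist_x_branch:
  assumes "c \<in> X" "v \<in> branch c"
  shows "gdist V E x v \<le> 3"
proof -
  have "is_walk V E (x # branch_seq c)"
    using is_walk_via_x_to_branch[OF assms(1) assms(1)] by (simp add: is_walk_Cons_Cons_iff)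
  with assms have "gdist V E x v < length (x # branch_seq c)"
    using gdist_walk_vertices set_branch_seq x_in_V by (metis list.set_intros(1,2))
  with branch_seq(2)[OF assms(1)] show ?thesis by simp
qed

lemma gdist_x_extension_branch:
  assumes "c \<in> X" "v \<in> branch c"
  shows "gdist V E x (extension v) \<le> 3"
  using extension_branch_in_branches[OF assms] gdist_x_branch by metis

lemma gdist_extension_branch:
  assumes "c \<in> X" "v \<in> branch c"
  shows "gdist V E v (extension v) \<le> 4"
proof -
  let ?ws = "next_attachment c # x # branch_seq c"
  have "v \<in> set ?ws" "extension v \<in> set ?ws"
    using assms extension_branch_into set_branch_seq by auto
  with is_walk_via_x_to_branch[OF assms(1) next_attachment_in_X[OF assms(1)]] have "gdist V E v (extension v) < length ?ws"
    by (rule gdist_walk_vertices)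
  with branch_seq(2)[OF assms(1)] show ?thesis by simp
qed

lemma gdist_extension_attachment:
  assumes "c \<in> X"
  shows "gdist V E c (extension c) \<le> 2"
proof (cases "branch_seq c = [c]")
  case True
  then have "extension c = next_attachment c" using extension_branch[OF assms attachment_in_branch[OF assms]] by simp
  moreover have "is_walk V E [c, x, next_attachment c]"
    using is_walk_via_x_to_branch[OF assms next_attachment_in_X[OF assms]] True is_walk_rev by fastforce
  ultimately show ?thesis using gdist_walk_vertices[of V E "[c, x, next_attachment c]" c "extension c"] by simp
next
  case False
  let ?ys = "branch_seq c"
  have ys: "?ys = c # tl ?ys" "tl ?ys \<noteq> []"
    using branch_seq_Cons[OF assms] False by (metis, metis)
  have "extension c \<in> set (tl ?ys)"
    using extension_branch[OF assms attachment_in_branch[OF assms]]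
      branch_shift_hd[OF ys(2) branch_seq(2)[OF assms]] branch_seq(3)[OF assms] by simp
  then have "extension c \<in> set ?ys" using ys(1) by (metis list.set_intros(2))
  moreover have "is_walk V E ?ys" using branch_seq_is_walk[OF assms] .
  ultimately have "gdist V E c (extension c) < length ?ys"
    using gdist_walk_vertices ys(1) by (metis list.set_intros(1))
  with branch_seq(2)[OF assms] show ?thesis by simp
qed

lemma extension_permutes: "extension permutes V"
proof -
  have into: "extension v \<in> V" if v: "v \<in> V" for v
  proof -
    consider "v \<in> core" | c where "c \<in> X" "v \<in> branch c" using core_or_branch[OF v] by blast
    then show ?thesis
    proof cases
      case 1 then show ?thesis using \<sigma>_in_core core_subset extension_core by auto
    next
      case 2 then show ?thesis using extension_branch_in_branches branch_subset by blast
    qed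
  qed
  have onto: "V \<subseteq> extension ` V"
  proof
    fix v assume "v \<in> V"
    then consider "v \<in> core" | c where "c \<in> X" "v \<in> branch c" using core_or_branch by blast
    then show "v \<in> extension ` V"
    proof cases
      case 1
      then obtain u where "u \<in> core" "v = \<sigma> u" using permutes_image[OF \<sigma>_permutes] by blast
      then show ?thesis using extension_core core_subset by (metis image_eqI subsetD)
    next
      case 2
      then show ?thesis using branch_subset_extension_image branch_subset by blast
    qed
  qed
  have "inj_on extension V" using finite_surj_inj[OF finite_V onto] .
  with into onto have "bij_betw extension V V" by (auto simp: bij_betw_def)
  then show ?thesis using extension_outside by (rule bij_imp_permutes)
qed

lemma extension_no_fixpoint: "v \<in> V \<Longrightarrow> extension v \<noteq> v"
  using core_or_branch \<sigma>_no_fixpoint extension_core extension_branch_neq by metis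

lemma no_edge_\<sigma>_x_extension:
  assumes "c \<in> X"
  shows "{\<sigma> x, extension c} \<notin> E"
proof
  assume "{\<sigma> x, extension c} \<in> E"
  then have edge: "{extension c, \<sigma> x} \<in> E" by (simp add: insert_commute)
  obtain c' where "c' \<in> X" "extension c \<in> branch c'"
    using extension_branch_in_branches[OF assms attachment_in_branch[OF assms]] .
  from edge_branch_core[OF this \<sigma>_in_core[OF x_in_core] edge] have "\<sigma> x = x" by simp
  with \<sigma>_no_fixpoint x_in_core show False by blast
qed

lemma extension_no_edge_image:
  assumes "{a, b} \<in> E"
  shows "{extension a, extension b} \<notin> E"
  using assms
proof (cases rule: edge_cases)
  case 1
  then have "{a, b} \<in> core_edges" using core_edge assms by blast
  then have "{\<sigma> a, \<sigma> b} \<notin> core_edges"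
    using good by (simp add: good_placement_def two_placement_def)
  with 1 show ?thesis using core_edge \<sigma>_in_core extension_core by metis
next
  case (2 c)
  then show ?thesis using no_edge_\<sigma>_x_extension extension_core x_in_core by simp
next
  case (3 c)
  then show ?thesis using no_edge_\<sigma>_x_extension extension_core x_in_core by (simp add: insert_commute)
next
  case (4 c)
  have next_c: "next_attachment c \<in> X" "next_attachment c \<noteq> c" "next_attachment c \<in> branch (next_attachment c)"
    using next_attachment_in_X[OF 4(1)] next_attachment_derangement(2) 4(1) attachment_in_branch by simp_all
  from extension_branch_edge[OF 4 assms]
  consider "extension a = next_attachment c" "extension b \<in> branch c" | "extension b = next_attachment c" "extension a \<in> branch c" by blast
  then show ?thesis
  proof cases
    case 1
    with no_edge_between_branches[OF next_c(1) 4(1) next_c(2) next_c(3)] show ?thesis by simp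
  next
    case 2
    with no_edge_between_branches[OF 4(1) next_c(1) next_c(2)[symmetric] _ next_c(3)] show ?thesis by simp
  qed
qed

lemma extension_in_V: "v \<in> V \<Longrightarrow> extension v \<in> V"
  using extension_permutes by (simp add: permutes_in_image)

lemma extension_edge_dist:
  assumes "{a, b} \<in> E"
  shows "gdist V E (extension a) (extension b) \<le> 5"
proof -
  have via: "gdist V E (extension a) (extension b) \<le> gdist V E x (extension a) + gdist V E x (extension b)"
    using gdist_via_x extension_in_V edge_vertices[OF assms] by blast
  have \<sigma>_x: "gdist V E x (extension x) \<le> 2"
    using gdist_core[OF x_in_core \<sigma>_in_core[OF x_in_core]] x_moves_close extension_core[OF x_in_core]
    by simp
  from assms show ?thesis
  proof (cases rule: edge_cases)
    case 1
    then have "{a, b} \<in> core_edges" using core_edge assms by blast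
    then have "gdist core core_edges (\<sigma> a) (\<sigma> b) \<le> 5" using good by (simp add: good_placement_def)
    with 1 show ?thesis using gdist_core \<sigma>_in_core extension_core by (metis le_trans)
  next
    case (2 c)
    with via \<sigma>_x gdist_x_extension_branch[OF 2(1) attachment_in_branch[OF 2(1)]] show ?thesis by simp
  next
    case (3 c)
    with via \<sigma>_x gdist_x_extension_branch[OF 3(1) attachment_in_branch[OF 3(1)]] show ?thesis by simp
  next
    case (4 c)
    have "gdist V E x (next_attachment c) \<le> 1" using gdist_x_attachment next_attachment_in_X 4(1) by blast
    with extension_branch_edge[OF 4 assms] via gdist_x_branch[OF 4(1)] show ?thesis by force
  qed
qed

lemma extension_z: "gdist V E z (extension z) = 1"
proof -
  have "gdist V E z (\<sigma> z) \<le> 1"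
    using gdist_core[OF z_in_core \<sigma>_in_core[OF z_in_core]] good by (simp add: good_placement_def)
  moreover have "gdist V E z (\<sigma> z) \<noteq> 0"
  proof
    assume "gdist V E z (\<sigma> z) = 0"
    moreover obtain ws where "is_walk V E ws" "hd ws = z" "last ws = \<sigma> z"
      using connected_graph_walk[OF connected] z_in_core \<sigma>_in_core[OF z_in_core] core_subset by blast
    ultimately have "z = \<sigma> z" using gdist_eq_0_imp_eq by metis
    with \<sigma>_no_fixpoint z_in_core show False by metis
  qed
  ultimately show ?thesis using extension_core[OF z_in_core] by simp
qed

lemma extension_z_neighbour:
  assumes "{z, y} \<in> E"
  shows "gdist V E y (extension y) \<le> 2"
proof -
  have "y \<in> V" using edge_vertices[OF assms] by simp
  then consider "y \<in> core" | c where "c \<in> X" "y \<in> branch c" using core_or_branch by blast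
  then show ?thesis
  proof cases
    case 1
    have "{z, y} \<in> core_edges" using core_edge[OF z_in_core 1 assms] .
    with 1 have "gdist core core_edges y (\<sigma> y) \<le> 2" using good by (simp add: good_placement_def)
    with 1 show ?thesis using gdist_core[OF 1 \<sigma>_in_core[OF 1]] extension_core[OF 1] by simp
  next
    case 2
    with assms have "y = c" using edge_branch_core z_in_core by (metis insert_commute)
    with 2 show ?thesis using gdist_extension_attachment by simp
  qed
qed

lemma extension_leaf:
  assumes "y \<in> V" "degree V E y = 1"
  shows "gdist V E y (extension y) \<le> 4"
proof -
  consider "y \<in> core" | c where "c \<in> X" "y \<in> branch c" using core_or_branch[OF assms(1)] by blast
  then show ?thesis
  proof cases
    case 1
    have "y \<noteq> x" using assms(2) degree_x by (auto simp: degree_def)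
    with 1 have "degree core core_edges y = 1" using core_neighbours assms(2) by (simp add: degree_def)
    with 1 have "gdist core core_edges y (\<sigma> y) \<le> 4" using good by (simp add: good_placement_def)
    with 1 show ?thesis using gdist_core[OF 1 \<sigma>_in_core[OF 1]] extension_core[OF 1] by simp
  next
    case 2 then show ?thesis by (rule gdist_extension_branch)
  qed
qed

theorem extension_good_placement: "good_placement V E z extension"
  unfolding good_placement_def two_placement_def
  using tree z_in_core core_subset extension_permutes extension_no_fixpoint
    extension_no_edge_image extension_edge_dist extension_z extension_z_neighbour extension_leaf
  by blast

end

theorem corollary3p1:
  fixes V :: "'a set" and E :: "'a set set" and x z :: 'a and X :: "'a set"
    and \<sigma> :: "'a \<Rightarrow> 'a"
  assumes "non_star_tree V E"
    and "x \<in> V"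
    and "card {y \<in> V. {x, y} \<in> E} > 2"
    and "X \<subseteq> {y \<in> V. {x, y} \<in> E}"
    and "2 \<le> card X" and "card X < card {y \<in> V. {x, y} \<in> E}"
    and "\<forall>xi\<in>X. nbr_F_tree V E xi x"
    and "V' = comp V (E - {{x, xi} | xi. xi \<in> X}) x"
    and "E' = induced (E - {{x, xi} | xi. xi \<in> X}) V'"
    and "z \<in> V'"
    and "good_placement V' E' z \<sigma>"
    and "gdist V' E' x (\<sigma> x) \<le> 2"
  shows "\<exists>\<sigma>z. good_placement V E z \<sigma>z \<and> (\<forall>v\<in>V'. \<sigma>z v = \<sigma> v) \<and>
           (\<forall>xi\<in>X. gdist V E xi (\<sigma>z xi) \<le> 2)"
proof -
  interpret pendant_branches V E x X
    using assms(1-4,7) by unfold_locales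
  have core: "core = V'" and core_edges: "core_edges = E'"
    using assms(8,9) by (simp_all add: core_def core_edges_def)
  interpret core_placement V E x X z \<sigma>
    by unfold_locales (use assms(5,10-12) core core_edges in simp_all)
  show ?thesis
    using extension_good_placement extension_core gdist_extension_attachment core by blast
qed

end
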